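(* Let $M$ be a matroid with set of bases $\mathcal{B}(M)$, and let $<$ be a total order of $\mathcal{B}(M)$. If the induced order $<_\bullet$ of the facets of the dual matroid polytope $P_M^*$ is a shelling order of $P_M^*$, then $<$ is a shelling order of the independence complex $\mathcal{I}(M)$.
   Context: A matroid $M$ on a finite ground set $E$ has independence complex $\mathcal{I}(M)$ (the simplicial complex of independent sets), whose facets are the bases $\mathcal{B}(M)$. For $S\subseteq E$, $\chi_S\in\mathbb{R}^E$ denotes the characteristic vector of $S$. The matroid polytope is $P_M=\mathrm{conv}\{\chi_B : B\in\mathcal{B}(M)\}\subset\mathbb{R}^E$; its vertices are exactly the $\chi_B$. The dual polytope $P_M^*$ is a polytope whose face lattice is the opposite of that of $P_M$; so its facets $F_B$ are in natural bijection with bases $B$ (the facet $F_B$ corresponding to the vertex $\chi_B$). For an order $<$ on $\mathcal{B}(M)$, $<_\bullet$ is the order on facets of $P_M^*$ given by $F_B<_\bullet F_{B'}$ iff $B<B'$. A shelling order of a pure simplicial complex is a total order $F_1<\dots<F_k$ of its facets such that for each $j\ge 2$, the complex $\langle F_1,\dots,F_{j-1}\rangle\cap\langle F_j\rangle$ is pure of dimension one less than the complex (here $\langle\mathcal{G}\rangle$ is the complex generated by $\mathcal{G}$). A shelling of a polygon is an ordering of its edges such that every edge after the first shares a vertex with an earlier edge; a shelling of a polytope of dimension $\ge 3$ is an order $F_1,\dots,F_k$ of its facets such that for each $j\ge2$, $F_j\cap\bigcup_{i<j}F_i$ is a union of facets of $F_j$ forming an initial segment of some shelling order of $F_j$. 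*)

theory Defs
  imports "HOL-Analysis.Analysis"
begin

section \<open>Matroids (via independent sets) on the finite ground set UNIV of a finite type\<close>

definition matroid :: "('e::finite set \<Rightarrow> bool) \<Rightarrow> bool" where
  "matroid indep \<longleftrightarrow>
     indep {} \<and>
     (\<forall>I J. indep J \<and> I \<subseteq> J \<longrightarrow> indep I) \<and>
     (\<forall>I J. indep I \<and> indep J \<and> card I < card J \<longrightarrow> (\<exists>x\<in>J - I. indep (insert x I)))"

definition matroid_bases :: "('e::finite set \<Rightarrow> bool) \<Rightarrow> 'e set set" where
  "matroid_bases indep = {B. indep B \<and> (\<forall>I. indep I \<and> B \<subseteq> I \<longrightarrow> I = B)}"

definition indep_complex :: "('e::finite set \<Rightarrow> bool) \<Rightarrow> 'e set set" where
  "indep_complex indep = {I. indep I}"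

definition charvec :: "'e::finite set \<Rightarrow> real ^ 'e" where
  "charvec S = (\<chi> i. if i \<in> S then 1 else 0)"

definition matroid_polytope :: "('e::finite set \<Rightarrow> bool) \<Rightarrow> (real ^ 'e) set" where
  "matroid_polytope indep = convex hull (charvec ` matroid_bases indep)"

definition complex_generated :: "'a set set \<Rightarrow> 'a set set" where
  "complex_generated Fs = {S. \<exists>F\<in>Fs. S \<subseteq> F}"

definition simplicial_facets :: "'a set set \<Rightarrow> 'a set set" where
  "simplicial_facets K = {F\<in>K. \<forall>G\<in>K. F \<subseteq> G \<longrightarrow> G = F}"

text \<open>A complex of finite sets is pure of dimension n-1 iff all its faces have at most n
  elements and every face lies in a face with exactly n elements.\<close>
definition pure_card :: "'a set set \<Rightarrow> nat \<Rightarrow> bool" where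
  "pure_card K n \<longleftrightarrow> (\<forall>S\<in>K. card S \<le> n) \<and> (\<forall>S\<in>K. \<exists>T\<in>K. S \<subseteq> T \<and> card T = n)"

text \<open>Shelling order of a (pure, finite) simplicial complex K, given as a list of its facets.
  The dimension of K is Max (card ` K) - 1, so "one less" means faces of size Max(card ` K) - 1.\<close>
definition simplicial_shelling :: "'a set set \<Rightarrow> 'a set list \<Rightarrow> bool" where
  "simplicial_shelling K L \<longleftrightarrow>
     distinct L \<and> set L = simplicial_facets K \<and>
     (\<forall>j. 0 < j \<and> j < length L \<longrightarrow>
        pure_card (complex_generated (set (take j L)) \<inter> complex_generated {L ! j})
                  (Max (card ` K) - 1))"

section \<open>Shellings of the dual polytope, described via the (reversed) face lattice of P\<close>

text \<open>The face of the dual polytope P* dual to a face G of P is encoded by G itself.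
  Its faces are encoded by the faces of P containing G; its facets by the faces of P
  covering G. Its dimension is aff_dim P - 1 - aff_dim G.  A point-set union of faces of P*
  is encoded by the set of faces of P* it contains (the generated subcomplex).\<close>

definition dual_below :: "('a::euclidean_space) set \<Rightarrow> 'a set \<Rightarrow> 'a set set" where
  "dual_below P G = {H. H face_of P \<and> G \<subseteq> H}"

definition dual_facets :: "('a::euclidean_space) set \<Rightarrow> 'a set \<Rightarrow> 'a set set" where
  "dual_facets P G = {H. H face_of P \<and> G \<subset> H \<and> \<not> (\<exists>K. K face_of P \<and> G \<subset> K \<and> K \<subset> H)}"

definition dual_vertex :: "('a::euclidean_space) set \<Rightarrow> 'a set \<Rightarrow> bool" where
  "dual_vertex P V \<longleftrightarrow> V face_of P \<and> aff_dim V = aff_dim P - 1"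

definition dual_facet_list :: "('a::euclidean_space) set \<Rightarrow> 'a set \<Rightarrow> 'a set list \<Rightarrow> bool" where
  "dual_facet_list P G L \<longleftrightarrow> distinct L \<and> set L = dual_facets P G"

text \<open>dual_shelling d P G L: L is a shelling order of the d-dimensional face of P* dual to G.
  Dimension at most 1: any ordering of the facets; dimension 2 (polygon): every edge after
  the first shares a vertex with an earlier edge; dimension at least 3: recursive condition
  (nonempty initial segment of a shelling of the facet).\<close>
fun dual_shelling :: "nat \<Rightarrow> ('a::euclidean_space) set \<Rightarrow> 'a set \<Rightarrow> 'a set list \<Rightarrow> bool" where
  "dual_shelling 0 P G L = dual_facet_list P G L"
| "dual_shelling (Suc 0) P G L = dual_facet_list P G L"
| "dual_shelling (Suc (Suc 0)) P G L =
     (dual_facet_list P G L \<and>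
      (\<forall>j. 0 < j \<and> j < length L \<longrightarrow>
         (\<exists>i<j. \<exists>V. dual_vertex P V \<and> V \<in> dual_below P (L ! j) \<and> V \<in> dual_below P (L ! i))))"
| "dual_shelling (Suc (Suc (Suc n))) P G L =
     (dual_facet_list P G L \<and>
      (\<forall>j. 0 < j \<and> j < length L \<longrightarrow>
         (\<exists>L' r. dual_shelling (Suc (Suc n)) P (L ! j) L' \<and> 1 \<le> r \<and> r \<le> length L' \<and>
            dual_below P (L ! j) \<inter> (\<Union>i<j. dual_below P (L ! i)) =
            (\<Union>k<r. dual_below P (L' ! k)))))"

end

theory Submission
  imports Defs
begin

text \<open>An order \<open>B\<^sub>1, ..., B\<^sub>k\<close> of the bases is a shelling of the independence complex as soon
  as for all \<open>i < j\<close> there is an \<open>m < j\<close> with \<open>B\<^sub>i \<inter> B\<^sub>j \<subseteq> B\<^sub>m\<close> and \<open>|B\<^sub>j - B\<^sub>m| = 1\<close>.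
  The bases containing \<open>T = B\<^sub>i \<inter> B\<^sub>j\<close> are the vertices of a face of \<open>P\<^sub>M\<close>, which is dual to a
  face of \<open>P\<^sub>M\<^sup>*\<close> lying in both facets \<open>F(B\<^sub>i)\<close> and \<open>F(B\<^sub>j)\<close>. The shelling condition for \<open>F(B\<^sub>j)\<close>
  then yields an edge of \<open>P\<^sub>M\<close> from \<open>B\<^sub>j\<close> to an earlier vertex \<open>B\<^sub>m\<close> inside this face, so
  \<open>T \<subseteq> B\<^sub>m\<close>; and edges of \<open>P\<^sub>M\<close> join bases differing in a single exchange, because the
  maximum-weight bases for any weight are connected by single exchanges.\<close>

lemma matroid_indep_subset: "matroid indep \<Longrightarrow> indep J \<Longrightarrow> I \<subseteq> J \<Longrightarrow> indep I"
  unfolding matroid_def by blast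

lemma matroid_augment:
  "matroid indep \<Longrightarrow> indep I \<Longrightarrow> indep J \<Longrightarrow> card I < card J \<Longrightarrow> \<exists>x\<in>J - I. indep (insert x I)"
  unfolding matroid_def by blast

lemma matroid_bases_indep: "B \<in> matroid_bases indep \<Longrightarrow> indep B"
  unfolding matroid_bases_def by blast

lemma indep_card_le_basis:
  assumes m: "matroid indep" and B: "B \<in> matroid_bases indep" and I: "indep I"
  shows "card I \<le> card B"
proof (rule ccontr)
  assume "\<not> card I \<le> card B"
  then obtain x where x: "x \<in> I - B" "indep (insert x B)"
    using matroid_augment[OF m matroid_bases_indep[OF B] I] by auto
  then have "insert x B = B" using B unfolding matroid_bases_def by blast
  with x show False by blast
qed

lemma matroid_bases_card_eq:
  "matroid indep \<Longrightarrow> A \<in> matroid_bases indep \<Longrightarrow> B \<in> matroid_bases indep \<Longrightarrow> card A = card B"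
  by (meson indep_card_le_basis le_antisym matroid_bases_indep)

lemma indep_card_ge_basis_imp_basis:
  assumes m: "matroid indep" and B: "B \<in> matroid_bases indep" and I: "indep I"
    and "card B \<le> card I"
  shows "I \<in> matroid_bases indep"
proof -
  have "J = I" if "indep J" "I \<subseteq> J" for J
  proof (rule ccontr)
    assume "J \<noteq> I"
    then have "card I < card J" using that by (intro psubset_card_mono) auto
    then show False using indep_card_le_basis[OF m B \<open>indep J\<close>] \<open>card B \<le> card I\<close> by linarith
  qed
  then show ?thesis using I unfolding matroid_bases_def by blast
qed

lemma basis_exchange:
  fixes indep :: "'e::finite set \<Rightarrow> bool"
  assumes m: "matroid indep" and A: "A \<in> matroid_bases indep" and B: "B \<in> matroid_bases indep"
    and a: "a \<in> A - B"
  obtains b where "b \<in> B - A" "insert b (A - {a}) \<in> matroid_bases indep"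
proof -
  have "indep (A - {a})" using matroid_indep_subset[OF m matroid_bases_indep[OF A]] by blast
  moreover have "card (A - {a}) < card B"
    using a matroid_bases_card_eq[OF m A B] by (metis Diff_iff card_Diff1_less finite)
  ultimately obtain x where x: "x \<in> B - (A - {a})" "indep (insert x (A - {a}))"
    using matroid_augment[OF m _ matroid_bases_indep[OF B]] by blast
  have "x \<noteq> a" using x a by blast
  then have "card (insert x (A - {a})) = card A"
    using x a card_Suc_Diff1[of A a] by (metis Diff_iff card_insert_disjoint finite insertE)
  then have "insert x (A - {a}) \<in> matroid_bases indep"
    using indep_card_ge_basis_imp_basis[OF m A x(2)] by simp
  moreover have "x \<in> B - A" using x \<open>x \<noteq> a\<close> by blast
  ultimately show thesis using that by blast
qed

lemma card_Diff_ge_1_if_card_eq: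
  assumes "finite A" "finite B" "card A = card B" "A \<noteq> B"
  shows "1 \<le> card (A - B)"
proof -
  have "\<not> A \<subseteq> B" using assms card_subset_eq by blast
  then show ?thesis using assms(1) by (simp add: Suc_le_eq card_gt_0_iff)
qed

lemma sum_insert_Diff_singleton:
  fixes w :: "'e \<Rightarrow> 'a::ab_group_add"
  assumes "finite A" "a \<in> A" "b \<notin> A"
  shows "sum w (insert b (A - {a})) = sum w A - w a + w b"
  using assms by (simp add: sum_diff1 algebra_simps)

text \<open>Exchanging the lightest element of the symmetric difference of two maximum-weight bases
  never loses weight, so it either produces a neighbour of \<open>A\<close> directly or brings \<open>B\<close> closer
  to \<open>A\<close>.\<close>
lemma max_weight_bases_adjacent:
  fixes indep :: "'e::finite set \<Rightarrow> bool" and w :: "'e \<Rightarrow> 'a::linordered_ab_group_add"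
  assumes m: "matroid indep" and max: "\<And>B. B \<in> matroid_bases indep \<Longrightarrow> sum w B \<le> M"
    and A: "A \<in> matroid_bases indep" "sum w A = M"
    and B: "B \<in> matroid_bases indep" "sum w B = M" "A \<noteq> B"
  shows "\<exists>C\<in>matroid_bases indep. sum w C = M \<and> card (A - C) = 1"
  using B
proof (induction "card (A - B)" arbitrary: B rule: less_induct)
  case less
  have "1 \<le> card (A - B)"
    using card_Diff_ge_1_if_card_eq[OF finite finite matroid_bases_card_eq[OF m A(1) less.prems(1)]]
      less.prems(3) .
  show ?case
  proof (cases "card (A - B) = 1")
    case True
    then show ?thesis using less.prems by blast
  next
    case False
    define D where "D = (A - B) \<union> (B - A)"
    have "D \<noteq> {}" using \<open>1 \<le> card (A - B)\<close> unfolding D_def by auto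
    then have "Min (w ` D) \<in> w ` D" by (intro Min_in) simp_all
    then obtain e where "e \<in> D" "w e = Min (w ` D)" by auto
    then have e: "e \<in> D" "\<And>x. x \<in> D \<Longrightarrow> w e \<le> w x" by simp_all
    show ?thesis
    proof (cases "e \<in> A")
      case True
      then have e': "e \<in> A - B" using e(1) unfolding D_def by blast
      obtain b where b: "b \<in> B - A" "insert b (A - {e}) \<in> matroid_bases indep"
        using basis_exchange[OF m A(1) less.prems(1) e'] .
      have "w e \<le> w b" using e(2) b(1) unfolding D_def by blast
      moreover have "sum w (insert b (A - {e})) = M - w e + w b"
        using sum_insert_Diff_singleton[of A e b w] e' b(1) A(2) by simp
      ultimately have weight: "sum w (insert b (A - {e})) = M" using max[OF b(2)] by simp
      have "A - insert b (A - {e}) = {e}" using b e' by auto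
      then show ?thesis using weight by (intro bexI[OF _ b(2)]) simp
    next
      case False
      then have e': "e \<in> B - A" using e(1) unfolding D_def by blast
      obtain a where a: "a \<in> A - B" "insert a (B - {e}) \<in> matroid_bases indep"
        using basis_exchange[OF m less.prems(1) A(1) e'] .
      have "w e \<le> w a" using e(2) a(1) unfolding D_def by blast
      moreover have "sum w (insert a (B - {e})) = M - w e + w a"
        using sum_insert_Diff_singleton[of B e a w] e' a(1) less.prems(2) by simp
      ultimately have weight: "sum w (insert a (B - {e})) = M" using max[OF a(2)] by simp
      have closer: "A - insert a (B - {e}) = (A - B) - {a}" using a e' by auto
      have "card (A - B - {a}) < card (A - B)" "card (A - B - {a}) \<noteq> 0"
        using a(1) \<open>card (A - B) \<noteq> 1\<close> \<open>1 \<le> card (A - B)\<close> by (simp_all add: card_Diff_singleton)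
      then have "card (A - insert a (B - {e})) < card (A - B)" "A \<noteq> insert a (B - {e})"
        unfolding closer by auto
      then show ?thesis using less.hyps a(2) weight by blast
    qed
  qed
qed

lemma inner_charvec: "c \<bullet> charvec B = (\<Sum>i\<in>B. c $ i)"
  unfolding charvec_def inner_vec_def
  by (simp add: if_distrib sum.If_cases Int_absorb1 cong: if_cong)

lemma inner_charvec_charvec: "charvec T \<bullet> charvec B = real (card (B \<inter> T))"
  by (simp only: inner_charvec) (simp add: charvec_def sum.If_cases)

lemma inj_charvec: "inj charvec"
proof (rule injI)
  fix A B :: "'e::finite set"
  assume eq: "charvec A = charvec B"
  have "i \<in> A \<longleftrightarrow> i \<in> B" for i
    using arg_cong[OF eq, of "\<lambda>x. x $ i"] unfolding charvec_def by (auto split: if_splits)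
  then show "A = B" by blast
qed

lemma charvec_in_matroid_polytope:
  "B \<in> matroid_bases indep \<Longrightarrow> charvec B \<in> matroid_polytope indep"
  unfolding matroid_polytope_def by (simp add: hull_inc)

lemma convex_matroid_polytope: "convex (matroid_polytope indep)"
  unfolding matroid_polytope_def by (simp add: convex_convex_hull)

lemma polyhedron_matroid_polytope: "polyhedron (matroid_polytope indep)"
  unfolding matroid_polytope_def
  by (intro polytope_imp_polyhedron polytope_convex_hull) simp

lemma matroid_polytope_subset_halfspace:
  assumes "\<And>B. B \<in> matroid_bases indep \<Longrightarrow> c \<bullet> charvec B \<le> M"
  shows "matroid_polytope indep \<subseteq> {x. c \<bullet> x \<le> M}"
  unfolding matroid_polytope_def
  by (rule hull_minimal) (use assms convex_halfspace_le in auto)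

definition containing_face :: "('e::finite set \<Rightarrow> bool) \<Rightarrow> 'e set \<Rightarrow> (real ^ 'e) set" where
  "containing_face indep T = matroid_polytope indep \<inter> {x. charvec T \<bullet> x = real (card T)}"

lemma containing_face_face_of: "containing_face indep T face_of matroid_polytope indep"
  unfolding containing_face_def
proof (rule face_of_Int_supporting_hyperplane_le[OF convex_matroid_polytope])
  have "charvec T \<bullet> charvec B \<le> real (card T)" for B
    unfolding inner_charvec_charvec by (simp add: card_mono)
  then show "charvec T \<bullet> x \<le> real (card T)" if "x \<in> matroid_polytope indep" for x
    using matroid_polytope_subset_halfspace that by blast
qed

lemma charvec_in_containing_face_iff:
  assumes "B \<in> matroid_bases indep"
  shows "charvec B \<in> containing_face indep T \<longleftrightarrow> T \<subseteq> B"
proof -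
  have "card (B \<inter> T) = card T \<longleftrightarrow> T \<subseteq> B"
    by (metis Int_lower2 card_subset_eq finite inf.absorb_iff2)
  then show ?thesis
    unfolding containing_face_def using charvec_in_matroid_polytope[OF assms]
    by (simp add: inner_charvec_charvec)
qed

lemma face_of_matroid_polytope_max_weight:
  assumes "E face_of matroid_polytope indep"
  obtains w :: "'e::finite \<Rightarrow> real" and M
  where "\<And>B. B \<in> matroid_bases indep \<Longrightarrow> sum w B \<le> M"
    and "\<And>B. B \<in> matroid_bases indep \<Longrightarrow> charvec B \<in> E \<longleftrightarrow> sum w B = M"
proof -
  have "E exposed_face_of matroid_polytope indep"
    using assms exposed_face_of_polyhedron[OF polyhedron_matroid_polytope] by blast
  then obtain c M where cM: "matroid_polytope indep \<subseteq> {x. c \<bullet> x \<le> M}"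
    "E = matroid_polytope indep \<inter> {x. c \<bullet> x = M}"
    unfolding exposed_face_of_def by blast
  show thesis
  proof
    fix B assume "B \<in> matroid_bases indep"
    then have "charvec B \<in> matroid_polytope indep" by (rule charvec_in_matroid_polytope)
    then show "(\<Sum>i\<in>B. c $ i) \<le> M" "charvec B \<in> E \<longleftrightarrow> (\<Sum>i\<in>B. c $ i) = M"
      using cM by (auto simp: inner_charvec)
  qed
qed

text \<open>Take a weight exposing \<open>E\<close> and a maximum-weight basis \<open>C\<close> adjacent to \<open>B\<close>. The face
  \<open>E \<inter> containing_face indep (B \<inter> C)\<close> contains \<open>charvec C\<close>, so by minimality of \<open>E\<close> above
  \<open>{charvec B}\<close> it is all of \<open>E\<close>: every basis on \<open>E\<close> contains \<open>B \<inter> C\<close>.\<close>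
lemma matroid_polytope_edge_card_Diff:
  fixes indep :: "'e::finite set \<Rightarrow> bool"
  assumes m: "matroid indep"
    and B: "B \<in> matroid_bases indep" and B': "B' \<in> matroid_bases indep" "B \<noteq> B'"
    and E: "E \<in> dual_facets (matroid_polytope indep) {charvec B}" and B'E: "charvec B' \<in> E"
  shows "card (B - B') = 1"
proof -
  have E_face: "E face_of matroid_polytope indep" and BE: "charvec B \<in> E"
    using E unfolding dual_facets_def by auto
  obtain w :: "'e \<Rightarrow> real" and M where max: "\<And>X. X \<in> matroid_bases indep \<Longrightarrow> sum w X \<le> M"
    and on_E: "\<And>X. X \<in> matroid_bases indep \<Longrightarrow> charvec X \<in> E \<longleftrightarrow> sum w X = M"
    using face_of_matroid_polytope_max_weight[OF E_face] by blast
  have weights: "sum w B = M" "sum w B' = M" using on_E[OF B] on_E[OF B'(1)] BE B'E by auto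
  obtain C where C: "C \<in> matroid_bases indep" "sum w C = M" "card (B - C) = 1"
    using max_weight_bases_adjacent[OF m max B weights(1) B'(1) weights(2) B'(2)] by blast
  define K where "K = E \<inter> containing_face indep (B \<inter> C)"
  have K_face: "K face_of matroid_polytope indep"
    unfolding K_def by (rule face_of_Int[OF E_face containing_face_face_of])
  have "charvec B \<in> K" "charvec C \<in> K"
    unfolding K_def using B BE C on_E charvec_in_containing_face_iff by auto
  moreover have "charvec C \<noteq> charvec B"
    using C(3) inj_charvec by (metis Diff_cancel card.empty inj_eq zero_neq_one)
  ultimately have "{charvec B} \<subset> K" by blast
  moreover have "K \<subseteq> E" unfolding K_def by blast
  ultimately have "K = E"
    using E K_face unfolding dual_facets_def by blast
  then have "charvec B' \<in> K" using B'E by simp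
  then have "charvec B' \<in> containing_face indep (B \<inter> C)" unfolding K_def by simp
  then have "B \<inter> C \<subseteq> B'" using charvec_in_containing_face_iff[OF B'(1)] by simp
  then have "card (B - B') \<le> card (B - C)" by (intro card_mono) auto
  moreover have "1 \<le> card (B - B')"
    using card_Diff_ge_1_if_card_eq[OF finite finite matroid_bases_card_eq[OF m B B'(1)] B'(2)] .
  ultimately show ?thesis using C(3) by simp
qed

lemma dual_shelling_imp_dual_facet_list: "dual_shelling n P G L \<Longrightarrow> dual_facet_list P G L"
  by (induction n P G L rule: dual_shelling.induct) auto

lemma dual_facets_empty_subset_imp_eq:
  assumes "A \<in> dual_facets P {}" "A' \<in> dual_facets P {}" "A' \<subseteq> A"
  shows "A' = A"
  using assms unfolding dual_facets_def by blast

lemma low_dim_face_in_dual_facets: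
  assumes E: "E face_of P" "aff_dim E \<le> 1"
    and A: "A \<in> dual_facets P {}" "A' \<in> dual_facets P {}" "A \<noteq> A'" "A \<subseteq> E" "A' \<subseteq> E"
  shows "E \<in> dual_facets P A"
proof -
  have "A \<subset> E" using A dual_facets_empty_subset_imp_eq by blast
  moreover have "K = E" if K: "K face_of P" "A \<subset> K" "K \<subseteq> E" for K
  proof (rule ccontr)
    assume "K \<noteq> E"
    moreover have "K face_of E" using face_of_subset[OF K(1) K(3) face_of_imp_subset[OF E(1)]] .
    ultimately have "aff_dim K < aff_dim E"
      using face_of_aff_dim_lt[OF face_of_imp_convex[OF E(1)]] by blast
    then have "aff_dim K < 0 \<or> aff_dim K = 0" using E(2) by linarith
    then have "K = {} \<or> (\<exists>a. K = {a})" by (metis aff_dim_eq_0 aff_dim_negative_iff)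
    moreover have "A \<noteq> {}" using A(1) unfolding dual_facets_def by blast
    ultimately show False using K(2) by blast
  qed
  ultimately show ?thesis using E(1) unfolding dual_facets_def by blast
qed

text \<open>If \<open>aff_dim H \<le> 1\<close>, \<open>H\<close> itself is the edge (with \<open>m = i\<close>); otherwise \<open>P\<^sup>*\<close> has dimension at least 2
  and the shelling condition at the facet dual to \<open>L ! j\<close> supplies the edge.\<close>
lemma dual_shelling_earlier_edge:
  fixes P :: "'a::euclidean_space set"
  assumes P: "convex P" and sh: "dual_shelling (nat (aff_dim P)) P {} L"
    and ij: "i < j" "j < length L"
    and H: "H face_of P" "L ! i \<subseteq> H" "L ! j \<subseteq> H"
  shows "\<exists>m<j. \<exists>E\<in>dual_facets P (L ! j). E \<subseteq> H \<and> L ! m \<subseteq> E"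
proof -
  have "0 < j" using ij by simp
  have L: "distinct L" "set L = dual_facets P {}"
    using dual_shelling_imp_dual_facet_list[OF sh] unfolding dual_facet_list_def by auto
  have Lj: "L ! j \<in> dual_facets P {}" using L(2) ij by (metis nth_mem)
  have L_earlier: "L ! k \<in> dual_facets P {}" if "k < j" for k
    using L(2) ij that by (metis less_trans nth_mem)
  have L_neq: "L ! j \<noteq> L ! k" if "k < j" for k
    using L(1) ij that by (simp add: nth_eq_iff_index_eq)
  show ?thesis
  proof (cases "aff_dim H \<le> 1")
    case True
    then have "H \<in> dual_facets P (L ! j)"
      using low_dim_face_in_dual_facets[OF H(1) True Lj L_earlier L_neq] ij H by blast
    then show ?thesis using ij H by blast
  next
    case False
    then have "2 \<le> aff_dim P" using aff_dim_subset[OF face_of_imp_subset[OF H(1)]] by linarith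
    then have "nat (aff_dim P) = Suc (Suc (nat (aff_dim P) - 2))" by linarith
    then consider "nat (aff_dim P) = 2" | n where "nat (aff_dim P) = Suc (Suc (Suc n))"
      by (cases "nat (aff_dim P) - 2") auto
    then show ?thesis
    proof cases
      case 1
      then have dim: "aff_dim P = 2" by linarith
      have "H = P"
      proof (rule ccontr)
        assume "H \<noteq> P"
        then have "aff_dim H < aff_dim P" by (rule face_of_aff_dim_lt[OF P H(1)])
        then show False using False dim by linarith
      qed
      have "\<forall>j. 0 < j \<and> j < length L \<longrightarrow>
          (\<exists>m<j. \<exists>V. dual_vertex P V \<and> V \<in> dual_below P (L ! j) \<and> V \<in> dual_below P (L ! m))"
        using sh unfolding 1 numeral_2_eq_2 dual_shelling.simps(3) by (rule conjunct2)
      then have "\<exists>m<j. \<exists>V. dual_vertex P V \<and> V \<in> dual_below P (L ! j) \<and> V \<in> dual_below P (L ! m)"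
        using \<open>0 < j\<close> ij(2) by blast
      then obtain m V where V: "m < j" "dual_vertex P V" "L ! j \<subseteq> V" "L ! m \<subseteq> V"
        unfolding dual_below_def by blast
      have "V face_of P" "aff_dim V \<le> 1" using V(2) dim unfolding dual_vertex_def by auto
      then have "V \<in> dual_facets P (L ! j)"
        using low_dim_face_in_dual_facets[OF _ _ Lj L_earlier[OF V(1)] L_neq[OF V(1)] V(3,4)]
        by blast
      moreover have "V \<subseteq> H" using \<open>V face_of P\<close> \<open>H = P\<close> face_of_imp_subset by blast
      ultimately show ?thesis using V(1,4) by blast
    next
      case (2 n)
      have shelling: "\<forall>j. 0 < j \<and> j < length L \<longrightarrow>
          (\<exists>L' r. dual_shelling (Suc (Suc n)) P (L ! j) L' \<and> 1 \<le> r \<and> r \<le> length L' \<and>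
            dual_below P (L ! j) \<inter> (\<Union>i<j. dual_below P (L ! i)) = (\<Union>k<r. dual_below P (L' ! k)))"
        using sh unfolding 2 dual_shelling.simps(4) by (rule conjunct2)
      obtain L' r where L': "dual_shelling (Suc (Suc n)) P (L ! j) L'" "r \<le> length L'"
        and below: "dual_below P (L ! j) \<inter> (\<Union>i<j. dual_below P (L ! i)) = (\<Union>k<r. dual_below P (L' ! k))"
        using spec[OF shelling, of j] \<open>0 < j\<close> ij(2) by auto
      have "H \<in> dual_below P (L ! j) \<inter> (\<Union>i<j. dual_below P (L ! i))"
        using H ij unfolding dual_below_def by blast
      then obtain k where k: "k < r" "H \<in> dual_below P (L' ! k)" unfolding below by blast
      define E where "E = L' ! k"
      have "E \<in> set L'" using k(1) L'(2) unfolding E_def by simp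
      then have E: "E \<in> dual_facets P (L ! j)"
        using dual_shelling_imp_dual_facet_list[OF L'(1)] unfolding dual_facet_list_def by simp
      then have "E \<in> dual_below P (L' ! k)" unfolding dual_facets_def dual_below_def E_def by simp
      then have "E \<in> (\<Union>k<r. dual_below P (L' ! k))" using k(1) by blast
      then have "E \<in> (\<Union>i<j. dual_below P (L ! i))" by (simp only: below[symmetric] Int_iff)
      then obtain m where "m < j" "L ! m \<subseteq> E" unfolding dual_below_def by blast
      moreover have "E \<subseteq> H" using k(2) unfolding dual_below_def E_def by simp
      ultimately show ?thesis using E by blast
    qed
  qed
qed

lemma simplicial_shellingI:
  fixes K :: "'a set set" and L :: "'a set list"
  assumes L: "distinct L" "set L = simplicial_facets K"
    and card: "\<And>F. F \<in> set L \<Longrightarrow> finite F \<and> card F = Max (card ` K)"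
    and exchange: "\<And>i j. i < j \<Longrightarrow> j < length L \<Longrightarrow>
      \<exists>m<j. L ! i \<inter> L ! j \<subseteq> L ! m \<and> card (L ! j - L ! m) = 1"
  shows "simplicial_shelling K L"
  unfolding simplicial_shelling_def
proof (intro conjI allI impI L)
  fix j assume j: "0 < j \<and> j < length L"
  let ?r = "Max (card ` K) - 1"
  let ?C = "complex_generated (set (take j L)) \<inter> complex_generated {L ! j}"
  have in_C: "L ! j \<inter> L ! m \<in> ?C" if "m < j" for m
    using that j unfolding complex_generated_def
    by (auto simp: in_set_conv_nth intro!: bexI[of _ "L ! m"] exI[of _ m])
  have card_C: "card (L ! j \<inter> L ! m) = ?r" if "card (L ! j - L ! m) = 1" "m < j" for m
    using card_Int_Diff[of "L ! j" "L ! m"] card[of "L ! j"] that j by simp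
  have "card S \<le> ?r \<and> (\<exists>T\<in>?C. S \<subseteq> T \<and> card T = ?r)" if "S \<in> ?C" for S
  proof -
    obtain i where i: "i < j" "S \<subseteq> L ! i" "S \<subseteq> L ! j"
      using \<open>S \<in> ?C\<close> j unfolding complex_generated_def by (auto simp: in_set_conv_nth)
    obtain m where m: "m < j" "L ! i \<inter> L ! j \<subseteq> L ! m" "card (L ! j - L ! m) = 1"
      using exchange[OF i(1)] j by blast
    have "S \<subseteq> L ! j \<inter> L ! m" using i m by blast
    moreover have "finite (L ! j \<inter> L ! m)" using card[of "L ! j"] j by simp
    ultimately show ?thesis using card_mono card_C[OF m(3,1)] in_C[OF m(1)] by metis
  qed
  then show "pure_card ?C (Max (card ` K) - 1)" unfolding pure_card_def by blast
qed

lemma simplicial_facets_indep_complex: "simplicial_facets (indep_complex indep) = matroid_bases indep"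
  unfolding simplicial_facets_def indep_complex_def matroid_bases_def by blast

lemma Max_card_indep_complex:
  "matroid indep \<Longrightarrow> B \<in> matroid_bases indep \<Longrightarrow> Max (card ` indep_complex indep) = card B"
  unfolding indep_complex_def
  by (rule Max_eqI) (auto intro: indep_card_le_basis matroid_bases_indep)

lemma dual_shelling_matroid_polytope_exchange:
  fixes indep :: "'e::finite set \<Rightarrow> bool" and Bs :: "'e set list"
  assumes m: "matroid indep" and Bs: "distinct Bs" "set Bs = matroid_bases indep"
    and sh: "dual_shelling (nat (aff_dim (matroid_polytope indep))) (matroid_polytope indep) {}
      (map (\<lambda>B. {charvec B}) Bs)"
    and ij: "i < j" "j < length Bs"
  shows "\<exists>m<j. Bs ! i \<inter> Bs ! j \<subseteq> Bs ! m \<and> card (Bs ! j - Bs ! m) = 1"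
proof -
  have basis: "Bs ! k \<in> matroid_bases indep" if "k < length Bs" for k
    using Bs(2) that by (metis nth_mem)
  have Bij: "Bs ! i \<in> matroid_bases indep" "Bs ! j \<in> matroid_bases indep"
    using basis ij by auto
  define H where "H = containing_face indep (Bs ! i \<inter> Bs ! j)"
  let ?L = "map (\<lambda>B. {charvec B}) Bs"
  have H: "H face_of matroid_polytope indep"
    unfolding H_def by (rule containing_face_face_of)
  have L: "?L ! i \<subseteq> H" "?L ! j \<subseteq> H" "j < length ?L"
    unfolding H_def using Bij ij by (simp_all add: charvec_in_containing_face_iff)
  have "\<exists>m<j. \<exists>E\<in>dual_facets (matroid_polytope indep) (?L ! j). E \<subseteq> H \<and> ?L ! m \<subseteq> E"
    by (rule dual_shelling_earlier_edge[OF convex_matroid_polytope sh ij(1) L(3) H L(1,2)])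
  then obtain m E where mE: "m < j" "E \<in> dual_facets (matroid_polytope indep) {charvec (Bs ! j)}"
    "E \<subseteq> H" "charvec (Bs ! m) \<in> E"
    using ij by auto
  have Bm: "Bs ! m \<in> matroid_bases indep" using basis mE(1) ij by simp
  have "charvec (Bs ! m) \<in> containing_face indep (Bs ! i \<inter> Bs ! j)"
    using mE(3,4) unfolding H_def by blast
  then have "Bs ! i \<inter> Bs ! j \<subseteq> Bs ! m" by (simp add: charvec_in_containing_face_iff[OF Bm])
  moreover have "Bs ! j \<noteq> Bs ! m" using Bs(1) mE(1) ij by (simp add: nth_eq_iff_index_eq)
  then have "card (Bs ! j - Bs ! m) = 1"
    by (rule matroid_polytope_edge_card_Diff[OF m Bij(2) Bm _ mE(2,4)])
  ultimately show ?thesis using mE(1) by blast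
qed

theorem theorem1p1:
  fixes indep :: "'e::finite set \<Rightarrow> bool" and Bs :: "'e set list"
  assumes "matroid indep"
    and "distinct Bs" and "set Bs = matroid_bases indep"
    and "dual_shelling (nat (aff_dim (matroid_polytope indep))) (matroid_polytope indep) {}
           (map (\<lambda>B. {charvec B}) Bs)"
  shows "simplicial_shelling (indep_complex indep) Bs"
proof (rule simplicial_shellingI)
  show "distinct Bs" by fact
  show "set Bs = simplicial_facets (indep_complex indep)"
    unfolding simplicial_facets_indep_complex by fact
  show "finite B \<and> card B = Max (card ` indep_complex indep)" if "B \<in> set Bs" for B
    using Max_card_indep_complex[OF assms(1)] that assms(3) by simp
  show "\<exists>m<j. Bs ! i \<inter> Bs ! j \<subseteq> Bs ! m \<and> card (Bs ! j - Bs ! m) = 1"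
    if "i < j" "j < length Bs" for i j
    using dual_shelling_matroid_polytope_exchange[OF assms that] .
qed

end
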